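(* There are infinitely many mixed graphs $M_G$ with $\operatorname{rank} N(M_G)=2$ which are not determined by their spectrum.
   Context: A mixed graph $M_G$ is obtained from a finite simple graph $G$ by orienting the edges of some subset of $E(G)$. With $\omega=\frac{1+\mathbf{i}\sqrt3}{2}$, $N(M_G)$ has $(u,v)$-entry $\omega$ if $\overrightarrow{uv}$ is an arc, $\bar\omega$ if $\overrightarrow{vu}$ is an arc, $1$ for an undirected edge, $0$ otherwise; cospectral means same eigenvalue multiset of $N$. Mixed graphs are considered up to isomorphism. $\mathbb{T}_6=\{1,-1,\omega,\bar\omega,-\omega,-\bar\omega\}$. Given a partition $V(M_G)=\bigcup_{j\in\mathbb{T}_6}V_j$ into six possibly empty sets, an edge or arc $xy$ has type $(j,k)$ if $x\in V_j,y\in V_k$ (arcs directed from $x$ to $y$). The partition is admissible if every undirected edge has type $(j,j)$ or $(j,\omega j)$, and every arc has type $(j,j)$, $(j,\bar\omega j)$ or $(j,-\omega j)$, for some $j$. A three-way switching w.r.t. an admissible partition replaces each undirected edge of type $(j,\omega j)$ by an arc from $V_j$ to $V_{\omega j}$, replaces each arc of type $(j,\bar\omega j)$ by an undirected edge, and reverses each arc of type $(j,-\omega j)$. The converse reverses all arcs. Two mixed graphs are switching equivalent if one is obtained from the other by a sequence of three-way switchings and taking converses. A mixed graph is determined by its spectrum if it is switching equivalent to every mixed graph cospectral with it. *)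

theory Defs
  imports "Jordan_Normal_Form.Char_Poly" "Jordan_Normal_Form.DL_Rank"
    "HOL-Computational_Algebra.Fundamental_Theorem_Algebra"
begin

text \<open>A mixed graph on the vertex set {0..<n}: undirected edges (symmetric) and arcs.\<close>
record mgraph =
  nv :: nat
  edge :: "nat \<Rightarrow> nat \<Rightarrow> bool"
  arc :: "nat \<Rightarrow> nat \<Rightarrow> bool"

definition wf_mgraph :: "mgraph \<Rightarrow> bool" where
  "wf_mgraph M \<longleftrightarrow>
     (\<forall>u v. edge M u v \<longrightarrow> u < nv M \<and> v < nv M \<and> u \<noteq> v \<and> edge M v u) \<and>
     (\<forall>u v. arc M u v \<longrightarrow> u < nv M \<and> v < nv M \<and> u \<noteq> v \<and> \<not> arc M v u \<and> \<not> edge M u v)"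

definition omega :: complex where
  "omega = Complex (1/2) (sqrt 3 / 2)"

definition T6 :: "complex set" where
  "T6 = {1, -1, omega, cnj omega, - omega, - cnj omega}"

definition Nmat :: "mgraph \<Rightarrow> complex mat" where
  "Nmat M = mat (nv M) (nv M) (\<lambda>(i, j).
     if edge M i j then 1 else if arc M i j then omega else if arc M j i then cnj omega else 0)"

definition spectrum_mg :: "mgraph \<Rightarrow> complex multiset" where
  "spectrum_mg M = proots (char_poly (Nmat M))"

definition cospectral :: "mgraph \<Rightarrow> mgraph \<Rightarrow> bool" where
  "cospectral M M' \<longleftrightarrow> spectrum_mg M = spectrum_mg M'"

definition mrank :: "mgraph \<Rightarrow> nat" where
  "mrank M = vec_space.rank (nv M) (Nmat M)"

definition mg_iso :: "mgraph \<Rightarrow> mgraph \<Rightarrow> bool" where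
  "mg_iso M M' \<longleftrightarrow> nv M = nv M' \<and>
     (\<exists>f. bij_betw f {..<nv M} {..<nv M'} \<and>
        (\<forall>u<nv M. \<forall>v<nv M. (edge M u v \<longleftrightarrow> edge M' (f u) (f v)) \<and>
                           (arc M u v \<longleftrightarrow> arc M' (f u) (f v))))"

text \<open>A partition V = union of V_j (j in T6) is encoded by p, with V_j = {v. p v = j}.\<close>
definition admissible :: "mgraph \<Rightarrow> (nat \<Rightarrow> complex) \<Rightarrow> bool" where
  "admissible M p \<longleftrightarrow> (\<forall>v<nv M. p v \<in> T6) \<and>
     (\<forall>u v. edge M u v \<longrightarrow> p v = p u \<or> p v = omega * p u \<or> p u = omega * p v) \<and>
     (\<forall>u v. arc M u v \<longrightarrow> p v = p u \<or> p v = cnj omega * p u \<or> p v = - omega * p u)"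

definition three_way_switch :: "(nat \<Rightarrow> complex) \<Rightarrow> mgraph \<Rightarrow> mgraph" where
  "three_way_switch p M = \<lparr> nv = nv M,
     edge = (\<lambda>u v. (edge M u v \<and> p u = p v) \<or>
                   (arc M u v \<and> p v = cnj omega * p u) \<or> (arc M v u \<and> p u = cnj omega * p v)),
     arc = (\<lambda>u v. (edge M u v \<and> p v = omega * p u) \<or> (arc M u v \<and> p v = p u) \<or>
                  (arc M v u \<and> p u = - omega * p v)) \<rparr>"

definition mg_converse :: "mgraph \<Rightarrow> mgraph" where
  "mg_converse M = \<lparr> nv = nv M, edge = edge M, arc = (\<lambda>u v. arc M v u) \<rparr>"

text \<open>One step: a three-way switching, taking the converse, or an isomorphism
  (mixed graphs are considered up to isomorphism).\<close>
definition sw_step :: "mgraph \<Rightarrow> mgraph \<Rightarrow> bool" where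
  "sw_step M M' \<longleftrightarrow> (\<exists>p. admissible M p \<and> M' = three_way_switch p M) \<or>
     M' = mg_converse M \<or> mg_iso M M'"

definition switching_equivalent :: "mgraph \<Rightarrow> mgraph \<Rightarrow> bool" where
  "switching_equivalent M M' \<longleftrightarrow> sw_step\<^sup>*\<^sup>* M M' \<or> sw_step\<^sup>*\<^sup>* M' M"

definition determined_by_spectrum :: "mgraph \<Rightarrow> bool" where
  "determined_by_spectrum M \<longleftrightarrow>
     (\<forall>M'. wf_mgraph M' \<and> cospectral M M' \<longrightarrow> switching_equivalent M M')"

end

theory Submission
  imports Defs
begin

text \<open>The star \<open>K\<^sub>1\<^sub>,\<^sub>4\<close> and the disjoint union of the 4-cycle with a vertex are
  cospectral (both have spectrum \<open>{2, -2, 0, 0, 0}\<close>) and have rank 2; adding \<open>k\<close> isolated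
  vertices to both keeps this. Three-way switchings and converses only change how edges are
  oriented, so switching equivalent mixed graphs have isomorphic underlying graphs and in particular
  the same vertex degrees. The star has a vertex of degree 4 and the cycle has none.\<close>

lemma infinite_quotientI:
  fixes x :: "nat \<Rightarrow> 'a"
  assumes "\<And>k. x k \<in> S" and "\<And>k. (x k, x k) \<in> R" and "\<And>j k. (x j, x k) \<in> R \<Longrightarrow> j = k"
  shows "infinite (S // R)"
proof -
  have "inj (\<lambda>k. R `` {x k})"
    using assms(2,3) by (auto intro!: injI)
  then have "infinite (range (\<lambda>k. R `` {x k}))"
    by (rule range_inj_infinite)
  moreover have "range (\<lambda>k. R `` {x k}) \<subseteq> S // R"
    using assms(1) by (auto intro: quotientI)
  ultimately show ?thesis
    using infinite_super by blast
qed

lemma similar_mat_intertwiningI: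
  assumes "{A, B, P, Q} \<subseteq> carrier_mat n n" "P * Q = 1\<^sub>m n" "Q * P = 1\<^sub>m n" "A * P = P * B"
  shows "similar_mat A B"
proof (rule similar_matI[OF assms(1-3)])
  have carrier: "A \<in> carrier_mat n n" "B \<in> carrier_mat n n" "P \<in> carrier_mat n n" "Q \<in> carrier_mat n n"
    using assms(1) by auto
  have "A = A * (P * Q)" using carrier(1) by (simp add: assms(2))
  also have "\<dots> = P * B * Q" using carrier by (simp flip: assms(4) add: assoc_mult_mat[of A n n P n Q n])
  finally show "A = P * B * Q" .
qed

lemma eq_mat_5I:
  assumes "A \<in> carrier_mat 5 5" "B \<in> carrier_mat 5 5"
    and "\<And>i j. i \<in> {0,1,2,3,4} \<Longrightarrow> j \<in> {0,1,2,3,4} \<Longrightarrow> A $$ (i,j) = B $$ (i,j)"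
  shows "A = B"
  using assms by (intro eq_matI) (auto simp: less_Suc_eq numeral_eq_Suc)

lemma (in vec_space) rank_le_2_sum_products:
  fixes f g f' g' :: "nat \<Rightarrow> 'a"
  assumes "A \<in> carrier_mat n nc" and "\<And>i j. i < n \<Longrightarrow> j < nc \<Longrightarrow> A $$ (i, j) = f i * g j + f' i * g' j"
  shows "rank A \<le> 2"
proof -
  define A1 where "A1 = mat n nc (\<lambda>(i, j). f i * g j)"
  define A2 where "A2 = mat n nc (\<lambda>(i, j). f' i * g' j)"
  have carrier: "A1 \<in> carrier_mat n nc" "A2 \<in> carrier_mat n nc"
    unfolding A1_def A2_def by simp_all
  have "A = A1 + A2"
    using assms unfolding A1_def A2_def by (intro eq_matI) auto
  moreover have "rank A1 \<le> 1" "rank A2 \<le> 1"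
    by (rule rank_le_1_product_entries[OF carrier(1)], simp add: A1_def)
      (rule rank_le_1_product_entries[OF carrier(2)], simp add: A2_def)
  ultimately show ?thesis
    using rank_subadditive[OF carrier] by simp
qed

lemma (in vec_space) rank_ge_2_by_entries:
  assumes A: "A \<in> carrier_mat n nc" and "a < nc" "b < nc" "i < n" "j < n"
    and "A $$ (i, a) = 0" "A $$ (j, a) \<noteq> 0" "A $$ (i, b) \<noteq> 0"
  shows "2 \<le> rank A"
proof -
  let ?c = "col A a" and ?d = "col A b"
  have c: "?c \<in> carrier_vec n" "?c $ i = 0" "?c $ j \<noteq> 0"
    and d: "?d \<in> carrier_vec n" "?d $ i \<noteq> 0"
    using assms by auto
  have "?c \<noteq> ?d" using c d by auto
  define B where "B = mat_of_cols n [?c, ?d]"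
  have B: "B \<in> carrier_mat n 2" and cols_B: "cols B = [?c, ?d]"
    unfolding B_def using c d by (auto simp: numeral_2_eq_2 cols_mat_of_cols)
  have "lin_indpt {?c, ?d}"
  proof
    assume "lin_dep {?c, ?d}"
    then obtain v where v: "v \<in> carrier_vec 2" "v \<noteq> 0\<^sub>v 2" "B *\<^sub>v v = 0\<^sub>v n"
      using lin_depE[OF B] cols_B \<open>?c \<noteq> ?d\<close> by auto
    have "(B *\<^sub>v v) $ k = v $ 0 * ?c $ k + v $ 1 * ?d $ k" if "k < n" for k
      using v(1) that c(1) d(1) unfolding B_def
      by (auto simp: scalar_prod_def mat_of_cols_def numeral_2_eq_2)
    then have "v $ 1 * ?d $ i = 0" "v $ 0 * ?c $ j + v $ 1 * ?d $ j = 0"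
      using v(3) c(2) \<open>i < n\<close> \<open>j < n\<close> by (metis add_0 index_zero_vec(1) mult_zero_right)+
    then have "v $ 0 = 0" "v $ 1 = 0" using c(3) d(2) by auto
    then have "v = 0\<^sub>v 2" using v(1) by (auto simp: numeral_2_eq_2 less_Suc_eq intro!: eq_vecI)
    then show False using v(2) by simp
  qed
  moreover have "{?c, ?d} \<subseteq> set (cols A)"
    using A assms(2,3) by (auto simp: cols_def)
  ultimately have "card {?c, ?d} \<le> rank A"
    by (rule rank_ge_card_indpt[OF A, rotated])
  then show ?thesis using \<open>?c \<noteq> ?d\<close> by simp
qed

definition underlying :: "mgraph \<Rightarrow> nat \<Rightarrow> nat \<Rightarrow> bool" where
  "underlying M u v \<longleftrightarrow> edge M u v \<or> edge M v u \<or> arc M u v \<or> arc M v u"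

definition edge_sym :: "mgraph \<Rightarrow> bool" where
  "edge_sym M \<longleftrightarrow> (\<forall>u<nv M. \<forall>v<nv M. edge M u v \<longrightarrow> edge M v u)"

lemma wf_mgraph_edge_sym: "wf_mgraph M \<Longrightarrow> edge_sym M"
  unfolding wf_mgraph_def edge_sym_def by blast

lemma underlying_commute: "underlying M u v \<longleftrightarrow> underlying M v u"
  unfolding underlying_def by blast

lemma underlying_three_way_switch:
  assumes adm: "admissible M p" and sym: "edge_sym M" and "u < nv M" "v < nv M"
  shows "underlying (three_way_switch p M) u v \<longleftrightarrow> underlying M u v"
proof
  show "underlying M u v" if "underlying (three_way_switch p M) u v"
    using that unfolding underlying_def three_way_switch_def by auto
next
  let ?N = "three_way_switch p M"
  have from_edge: "underlying ?N a b" if "edge M a b" "edge M b a" for a b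
  proof -
    from adm \<open>edge M a b\<close> have "p b = p a \<or> p b = omega * p a \<or> p a = omega * p b"
      unfolding admissible_def by blast
    then show ?thesis
      using that unfolding underlying_def three_way_switch_def by auto
  qed
  have from_arc: "underlying ?N a b" if "arc M a b" for a b
  proof -
    from adm that have "p b = p a \<or> p b = cnj omega * p a \<or> p b = - omega * p a"
      unfolding admissible_def by blast
    then show ?thesis
      using that unfolding underlying_def three_way_switch_def by auto
  qed
  have "edge M v u \<longleftrightarrow> edge M u v"
    using sym \<open>u < nv M\<close> \<open>v < nv M\<close> unfolding edge_sym_def by blast
  moreover assume "underlying M u v"
  ultimately show "underlying ?N u v"
    using from_edge[of u v] from_arc[of u v] from_arc[of v u] underlying_commute
    unfolding underlying_def[of M] by blast
qed

lemma edge_sym_three_way_switch: "edge_sym M \<Longrightarrow> edge_sym (three_way_switch p M)"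
  unfolding edge_sym_def three_way_switch_def by auto

definition degree :: "mgraph \<Rightarrow> nat \<Rightarrow> nat" where
  "degree M u = card {v. v < nv M \<and> underlying M u v}"

definition degrees :: "mgraph \<Rightarrow> nat set" where
  "degrees M = degree M ` {..<nv M}"

lemma degrees_three_way_switch:
  assumes "admissible M p" "edge_sym M"
  shows "degrees (three_way_switch p M) = degrees M"
proof -
  have "degree (three_way_switch p M) u = degree M u" if "u < nv M" for u
    unfolding degree_def using underlying_three_way_switch[OF assms that]
    by (simp add: three_way_switch_def cong: conj_cong)
  then show ?thesis
    unfolding degrees_def by (simp add: three_way_switch_def)
qed

lemma underlying_mg_converse: "underlying (mg_converse M) = underlying M"
  unfolding underlying_def mg_converse_def by (auto intro!: ext)

lemma edge_sym_mg_converse: "edge_sym (mg_converse M) = edge_sym M"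
  unfolding edge_sym_def mg_converse_def by simp

lemma degrees_mg_converse: "degrees (mg_converse M) = degrees M"
  unfolding degrees_def degree_def underlying_mg_converse by (simp add: mg_converse_def)

lemma mg_iso_refl: "mg_iso M M"
  unfolding mg_iso_def by (auto intro: exI[of _ id])

lemma mg_iso_invariants:
  assumes "mg_iso M M'" and "edge_sym M"
  shows "edge_sym M' \<and> degrees M' = degrees M"
proof -
  obtain f where nv: "nv M' = nv M" and bij: "bij_betw f {..<nv M} {..<nv M}"
    and pres: "\<And>u v. u < nv M \<Longrightarrow> v < nv M \<Longrightarrow>
       (edge M u v \<longleftrightarrow> edge M' (f u) (f v)) \<and> (arc M u v \<longleftrightarrow> arc M' (f u) (f v))"
    using assms(1) unfolding mg_iso_def by auto
  have onto: "\<exists>u<nv M. x = f u" if "x < nv M" for x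
    using bij that unfolding bij_betw_def by (metis imageE lessThan_iff)
  have into: "f u < nv M" if "u < nv M" for u
    using bij that unfolding bij_betw_def by auto
  have und: "underlying M' (f u) (f v) \<longleftrightarrow> underlying M u v" if "u < nv M" "v < nv M" for u v
    unfolding underlying_def using pres[OF that] pres[OF that(2,1)] by blast
  have "edge_sym M'"
    unfolding edge_sym_def nv
  proof (intro allI impI)
    fix x y assume "x < nv M" "y < nv M" "edge M' x y"
    with onto obtain u v where "u < nv M" "v < nv M" "x = f u" "y = f v" "edge M' (f u) (f v)"
      by metis
    then show "edge M' y x" using pres assms(2) unfolding edge_sym_def by blast
  qed
  have deg: "degree M' (f u) = degree M u" if "u < nv M" for u
  proof -
    have "{v. v < nv M' \<and> underlying M' (f u) v} = f ` {v. v < nv M \<and> underlying M u v}"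
      using onto into und[OF that] nv by (auto simp: image_iff) (metis und[OF that])
    moreover have "inj_on f {v. v < nv M \<and> underlying M u v}"
      using bij_betw_imp_inj_on[OF bij] by (rule inj_on_subset) auto
    ultimately show ?thesis
      unfolding degree_def by (simp add: card_image)
  qed
  have "degrees M' = degree M' ` f ` {..<nv M}"
    by (simp add: degrees_def nv bij_betw_imp_surj_on[OF bij])
  also have "\<dots> = degrees M"
    unfolding degrees_def image_image by (rule image_cong) (simp_all add: deg)
  finally show ?thesis using \<open>edge_sym M'\<close> by simp
qed

lemma sw_step_invariants:
  assumes "sw_step M M'" and "edge_sym M"
  shows "edge_sym M' \<and> degrees M' = degrees M"
  using assms mg_iso_invariants
    edge_sym_three_way_switch degrees_three_way_switch edge_sym_mg_converse degrees_mg_converse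
  unfolding sw_step_def by metis

lemma sw_steps_invariants:
  assumes "sw_step\<^sup>*\<^sup>* M M'" and "edge_sym M"
  shows "edge_sym M' \<and> degrees M' = degrees M"
  using assms by (induction rule: rtranclp_induct) (auto dest: sw_step_invariants)

lemma switching_equivalent_degrees:
  assumes "switching_equivalent M M'" and "edge_sym M" "edge_sym M'"
  shows "degrees M = degrees M'"
  using assms sw_steps_invariants unfolding switching_equivalent_def by metis

definition star_plus :: "nat \<Rightarrow> mgraph" where
  "star_plus k = \<lparr>nv = k + 5,
     edge = (\<lambda>u v. (u = 0 \<and> v \<in> {1..4}) \<or> (v = 0 \<and> u \<in> {1..4})), arc = (\<lambda>u v. False)\<rparr>"

text \<open>The 4-cycle \<open>0 - 1 - 2 - 3 - 0\<close>: two vertices below 4 are adjacent iff their sum is odd.\<close>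

definition cycle_plus :: "nat \<Rightarrow> mgraph" where
  "cycle_plus k = \<lparr>nv = k + 5,
     edge = (\<lambda>u v. u < 4 \<and> v < 4 \<and> odd (u + v)), arc = (\<lambda>u v. False)\<rparr>"

lemma wf_star_plus: "wf_mgraph (star_plus k)"
  unfolding wf_mgraph_def star_plus_def by auto

lemma wf_cycle_plus: "wf_mgraph (cycle_plus k)"
  unfolding wf_mgraph_def cycle_plus_def by (auto simp: add.commute)

lemma Nmat_star_plus_0: "Nmat (star_plus 0) = mat_of_rows_list 5
     [[0, 1, 1, 1, 1], [1, 0, 0, 0, 0], [1, 0, 0, 0, 0], [1, 0, 0, 0, 0], [1, 0, 0, 0, 0]]"
  by (rule eq_mat_5I) (auto simp: Nmat_def star_plus_def mat_of_rows_list_def numeral_eq_Suc)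

lemma Nmat_cycle_plus_0: "Nmat (cycle_plus 0) = mat_of_rows_list 5
     [[0, 1, 0, 1, 0], [1, 0, 1, 0, 0], [0, 1, 0, 1, 0], [1, 0, 1, 0, 0], [0, 0, 0, 0, 0]]"
  by (rule eq_mat_5I) (auto simp: Nmat_def cycle_plus_def mat_of_rows_list_def)

definition star_cycle_witness :: "complex mat" where
  "star_cycle_witness = mat_of_rows_list 5
     [[0, 1, 0, 1, 0], [1, 0, 0, 0, 0], [0, 1/2, 1, -1/2, 0], [1/2, -1/2, 1/2, 1/2, 1], [1/2, 0, 1/2, 0, -1]]"

definition star_cycle_witness_inv :: "complex mat" where
  "star_cycle_witness_inv = mat_of_rows_list 5
     [[0, 1, 0, 0, 0], [1/2, 1/2, 1/2, -1/2, -1/2], [0, -1/2, 1/2, 1/2, 1/2],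
      [1/2, -1/2, -1/2, 1/2, 1/2], [0, 1/4, 1/4, 1/4, -3/4]]"

lemma similar_Nmat_star_cycle_0: "similar_mat (Nmat (star_plus 0)) (Nmat (cycle_plus 0))"
proof (rule similar_mat_intertwiningI)
  let ?P = star_cycle_witness and ?Q = star_cycle_witness_inv
  show "{Nmat (star_plus 0), Nmat (cycle_plus 0), ?P, ?Q} \<subseteq> carrier_mat 5 5"
    by (simp add: Nmat_star_plus_0 Nmat_cycle_plus_0 star_cycle_witness_def
      star_cycle_witness_inv_def mat_of_rows_list_def numeral_eq_Suc)
  show "?P * ?Q = 1\<^sub>m 5" "?Q * ?P = 1\<^sub>m 5" "Nmat (star_plus 0) * ?P = ?P * Nmat (cycle_plus 0)"
    by (rule eq_mat_5I; auto simp: Nmat_star_plus_0 Nmat_cycle_plus_0 star_cycle_witness_def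
      star_cycle_witness_inv_def mat_of_rows_list_def scalar_prod_def sum.atLeast0_lessThan_Suc numeral_eq_Suc)+
qed

lemma Nmat_star_plus:
  "Nmat (star_plus k) = four_block_mat (Nmat (star_plus 0)) (0\<^sub>m 5 k) (0\<^sub>m k 5) (0\<^sub>m k k)"
  by (rule eq_matI) (auto simp: Nmat_def star_plus_def four_block_mat_def)

lemma Nmat_cycle_plus:
  "Nmat (cycle_plus k) = four_block_mat (Nmat (cycle_plus 0)) (0\<^sub>m 5 k) (0\<^sub>m k 5) (0\<^sub>m k k)"
  by (rule eq_matI) (auto simp: Nmat_def cycle_plus_def four_block_mat_def)

lemma cospectral_star_cycle: "cospectral (star_plus k) (cycle_plus k)"
proof -
  have "similar_mat (Nmat (star_plus k)) (Nmat (cycle_plus k))"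
    unfolding Nmat_star_plus[of k] Nmat_cycle_plus[of k]
    by (rule similar_mat_four_block_0_0[OF similar_Nmat_star_cycle_0 similar_mat_refl[of _ k]])
      (simp_all add: Nmat_def star_plus_def)
  then show ?thesis
    unfolding cospectral_def spectrum_mg_def by (simp add: char_poly_similar)
qed

lemma mrank_star_plus: "mrank (star_plus k) = 2"
proof -
  interpret vec_space "TYPE(complex)" "k + 5" .
  have N: "Nmat (star_plus k) \<in> carrier_mat (k + 5) (k + 5)"
    by (simp add: Nmat_def star_plus_def)
  let ?e0 = "\<lambda>i. if i = 0 then 1 else 0 :: complex" and ?leaf = "\<lambda>i. if i \<in> {1..4} then 1 else 0 :: complex"
  have "rank (Nmat (star_plus k)) \<le> 2"
    by (rule rank_le_2_sum_products[OF N, of ?e0 ?leaf ?leaf ?e0]) (auto simp: Nmat_def star_plus_def)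
  moreover have "2 \<le> rank (Nmat (star_plus k))"
    by (rule rank_ge_2_by_entries[OF N, of 0 1 0 1]) (simp_all add: Nmat_def star_plus_def)
  ultimately show ?thesis
    unfolding mrank_def by (simp add: star_plus_def)
qed

lemma degree_star_plus_centre: "degree (star_plus k) 0 = 4"
proof -
  have "{v. v < nv (star_plus k) \<and> underlying (star_plus k) 0 v} = {1..4}"
    unfolding underlying_def star_plus_def by auto
  then show ?thesis unfolding degree_def by simp
qed

lemma underlying_cycle_plus:
  assumes "underlying (cycle_plus k) u v"
  shows "v = (u + 1) mod 4 \<or> v = (u + 3) mod 4"
proof -
  have "u < 4" "v < 4" "odd (u + v)"
    using assms unfolding underlying_def cycle_plus_def by (auto simp: add.commute)
  moreover have "u \<in> {0, 1, 2, 3}" "v \<in> {0, 1, 2, 3}"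
    using \<open>u < 4\<close> \<open>v < 4\<close> by auto
  ultimately show ?thesis
    by auto
qed

lemma degree_cycle_plus_le: "degree (cycle_plus k) u \<le> 2"
proof -
  have "degree (cycle_plus k) u \<le> card {(u + 1) mod 4, (u + 3) mod 4}"
    unfolding degree_def by (rule card_mono) (auto dest: underlying_cycle_plus)
  also have "\<dots> \<le> 2"
    by (simp add: card_insert_if)
  finally show ?thesis .
qed

lemma not_switching_equivalent_star_cycle: "\<not> switching_equivalent (star_plus k) (cycle_plus k)"
proof
  assume "switching_equivalent (star_plus k) (cycle_plus k)"
  then have "degrees (star_plus k) = degrees (cycle_plus k)"
    using switching_equivalent_degrees wf_mgraph_edge_sym wf_star_plus wf_cycle_plus by blast
  moreover have "4 \<in> degrees (star_plus k)"
    unfolding degrees_def using degree_star_plus_centre by (force simp: star_plus_def)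
  moreover have "4 \<notin> degrees (cycle_plus k)"
  proof
    assume "4 \<in> degrees (cycle_plus k)"
    then obtain u where "degree (cycle_plus k) u = 4"
      unfolding degrees_def by auto
    with degree_cycle_plus_le[of k u] show False by simp
  qed
  ultimately show False by simp
qed

lemma not_determined_by_spectrum_star_plus: "\<not> determined_by_spectrum (star_plus k)"
  unfolding determined_by_spectrum_def
  using wf_cycle_plus cospectral_star_cycle not_switching_equivalent_star_cycle by blast

theorem proposition5p11:
  shows "infinite ({M. wf_mgraph M \<and> mrank M = 2 \<and> \<not> determined_by_spectrum M}
                   // {(M, M'). wf_mgraph M \<and> wf_mgraph M' \<and> mg_iso M M'})"
proof (rule infinite_quotientI[where x = star_plus])
  show "star_plus k \<in> {M. wf_mgraph M \<and> mrank M = 2 \<and> \<not> determined_by_spectrum M}" for k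
    using wf_star_plus mrank_star_plus not_determined_by_spectrum_star_plus by blast
  show "(star_plus k, star_plus k) \<in> {(M, M'). wf_mgraph M \<and> wf_mgraph M' \<and> mg_iso M M'}" for k
    using wf_star_plus mg_iso_refl by blast
  show "j = k" if "(star_plus j, star_plus k) \<in> {(M, M'). wf_mgraph M \<and> wf_mgraph M' \<and> mg_iso M M'}"
    for j k
    using that unfolding mg_iso_def star_plus_def by simp
qed

end
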